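(* Assume the setting described in the context, and let $i\in\{1,\dots,t\}$. Let $\mathbf p\in\mathcal C^*$ be divisible by none of $\pi_1,\dots,\pi_{i-1}$. Then there exist a unique $j\in\mathbb N$ and a unique $\mathbf q\in\mathcal C^*$ divisible by none of $\pi_1,\dots,\pi_i$ such that $\mathbf p=j\pi_i+\mathbf q$ (in transvectant terms: $\mathbb T(\mathbf p)\equiv\vartheta_i^j\,\mathbb T(\mathbf q)$).
   Context: $\mathbb N=\{0,1,2,\dots\}$. For a real square matrix $A_0$ put $\mathcal D_{A_0}f(\mathbf x)=f'(\mathbf x)A_0\mathbf x$. Let $(\acute X,\acute Y,\acute Z),(\grave X,\grave Y,\grave Z)$ be $\mathfrak{sl}_2$ triads ($[X,Y]=Z,[Z,X]=2X,[Z,Y]=-2Y$) of real $n\times n$ resp. $m\times m$ matrices; $\acute{\mathcal X}=\mathcal D_{\acute Y},\acute{\mathcal Y}=\mathcal D_{\acute X},\acute{\mathcal Z}=\mathcal D_{\acute Z}$ on $\mathbb R[[\mathbf x]]$, similarly on $\mathbb R[[\mathbf y]]$; $\acute{\mathcal J}=\ker\acute{\mathcal X}$, $\grave{\mathcal J}=\ker\grave{\mathcal X}$. Hilbert bases $\alpha=(\alpha_1,\dots,\alpha_p)$ of $\acute{\mathcal J}$ and $\beta=(\beta_1,\dots,\beta_q)$ of $\grave{\mathcal J}$ consist of homogeneous weight invariants (eigenvectors of $\acute{\mathcal Z}$ resp. $\grave{\mathcal Z}$ with weights $\widehat\alpha_i,\widehat\beta_j$) whose monomials span by countable linear combinations;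 $\widehat\alpha\mathbf k=\sum\widehat\alpha_ik_i$, $\widehat\beta\boldsymbol\ell=\sum\widehat\beta_j\ell_j$. $\acute A\subset\mathbb N^p,\grave A\subset\mathbb N^q$ are standard preferred sets (monomials $\alpha^{\mathbf k}$, $\mathbf k\in\acute A$, pairwise distinct, linearly independent, spanning $\acute{\mathcal J}$ by countable combinations; $\acute A$ closed under componentwise-smaller vectors; same for $\grave A$). $\mathcal C=\{(\mathbf k;\boldsymbol\ell;s)\in\mathbb N^{p+q+1}:s\le\widehat\alpha\mathbf k,s\le\widehat\beta\boldsymbol\ell\}$ (the element $(\mathbf k;\boldsymbol\ell;s)$ represents the transvectant $\mathbb T(\mathbf k;\boldsymbol\ell;s)=(\alpha^{\mathbf k},\beta^{\boldsymbol\ell})^{(s)}$, defined by $(f,g)^{(s)}=\sum_{j=0}^s(-1)^j\binom sj\frac{(\widehat f-j)!}{(\widehat f-s)!}\frac{(\widehat g-s+j)!}{(\widehat g-s)!}(\acute{\mathcal Y}^jf)(\grave{\mathcal Y}^{s-j}g)$), $\mathcal C^*=\{(\mathbf k;\boldsymbol\ell;s)\in\mathcal C:\mathbf k\in\acute A,\boldsymbol\ell\in\grave A\}$. For $\mathbf p,\mathbf r\in\mathcal C$, $\mathbf p$ is divisible by $\mathbf r$ if $\mathbf p-\mathbf r\in\mathcal C$. A prime is a nonzero element of $\mathcal C$ that is not a sum of two nonzero elements of $\mathcal C$; $\pi_1,\dots,\pi_t$ are the primes lying in $\mathcal C^*$, listed in a fixed order, and $\vartheta_i=\mathbb T(\pi_i)$.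 Equivalence $\equiv$ of a transvectant monomial $\prod\mathbb T(\mathbf p_r)^{m_r}$ with $\mathbb T(\mathbf p)$ means $\mathbf p=\sum m_r\mathbf p_r$. *)

theory Defs
  imports Main
begin

text \<open>Elements of N^(p+q+1) are represented as triples (k, l, s) with
  k a list of length p, l a list of length q and s a natural number.\<close>

type_synonym cvec = "nat list \<times> nat list \<times> nat"

definition wsum :: "nat list \<Rightarrow> nat list \<Rightarrow> nat" where
  "wsum w k = (\<Sum>i<length w. w ! i * k ! i)"

definition Ccone :: "nat list \<Rightarrow> nat list \<Rightarrow> cvec set" where
  "Ccone wa wb = {(k, l, s). length k = length wa \<and> length l = length wb \<and>
                    s \<le> wsum wa k \<and> s \<le> wsum wb l}"

definition Cstar :: "nat list \<Rightarrow> nat list \<Rightarrow> nat list set \<Rightarrow> nat list set \<Rightarrow> cvec set" where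
  "Cstar wa wb A B = {(k, l, s). (k, l, s) \<in> Ccone wa wb \<and> k \<in> A \<and> l \<in> B}"

definition cadd :: "cvec \<Rightarrow> cvec \<Rightarrow> cvec" where
  "cadd x y = (case x of (k, l, s) \<Rightarrow> case y of (k', l', s') \<Rightarrow>
      (map2 (+) k k', map2 (+) l l', s + s'))"

definition cscale :: "nat \<Rightarrow> cvec \<Rightarrow> cvec" where
  "cscale j x = (case x of (k, l, s) \<Rightarrow> (map ((*) j) k, map ((*) j) l, j * s))"

definition czero :: "nat list \<Rightarrow> nat list \<Rightarrow> cvec" where
  "czero wa wb = (replicate (length wa) 0, replicate (length wb) 0, 0)"

definition cdivisible :: "nat list \<Rightarrow> nat list \<Rightarrow> cvec \<Rightarrow> cvec \<Rightarrow> bool" where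
  "cdivisible wa wb x r \<longleftrightarrow> (\<exists>d \<in> Ccone wa wb. x = cadd r d)"

definition cprime :: "nat list \<Rightarrow> nat list \<Rightarrow> cvec \<Rightarrow> bool" where
  "cprime wa wb x \<longleftrightarrow> x \<in> Ccone wa wb \<and> x \<noteq> czero wa wb \<and>
     \<not> (\<exists>y \<in> Ccone wa wb. \<exists>z \<in> Ccone wa wb.
          y \<noteq> czero wa wb \<and> z \<noteq> czero wa wb \<and> x = cadd y z)"

text \<open>Combinatorial part of "standard preferred set": a set of exponent
  vectors of length n closed under componentwise-smaller vectors.\<close>
definition down_closed :: "nat \<Rightarrow> nat list set \<Rightarrow> bool" where
  "down_closed n A \<longleftrightarrow> (\<forall>k \<in> A. length k = n) \<and>
     (\<forall>k \<in> A. \<forall>k'. length k' = length k \<and> (\<forall>i < length k. k' ! i \<le> k ! i) \<longrightarrow> k' \<in> A)"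

end

theory Submission
  imports Defs
begin

text \<open>Only the fact that \<open>\<pi>\<^sub>i\<close> is a nonzero element of the cone matters. Repeatedly
  subtracting \<open>\<pi>\<^sub>i\<close> from \<open>\<bold>p\<close> terminates because the coordinate sum drops each time,
  stays inside \<open>C\<^sup>*\<close> because \<open>A\<close> and \<open>B\<close> are closed downwards, and never creates
  divisibility by \<open>\<pi>\<^sub>1, \<dots>, \<pi>\<^sub>i\<^sub>-\<^sub>1\<close>, since a divisor of the remainder also divides \<open>\<bold>p\<close>.
  Uniqueness follows from cancellation in \<open>\<nat>\<^sup>p\<^sup>+\<^sup>q\<^sup>+\<^sup>1\<close>: a surplus of \<open>\<pi>\<^sub>i\<close> on one side
  would make the other remainder divisible by \<open>\<pi>\<^sub>i\<close>.\<close>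

lemma map2_plus_assoc:
  "map2 (+) (map2 (+) xs ys) zs = map2 (+) xs (map2 (+) ys (zs :: 'a :: semigroup_add list))"
proof (induction xs arbitrary: ys zs)
  case (Cons x xs)
  then show ?case by (cases ys; cases zs) (auto simp: add.assoc)
qed simp

lemma map2_plus_commute: "map2 (+) xs ys = map2 (+) ys (xs :: 'a :: ab_semigroup_add list)"
proof (induction xs arbitrary: ys)
  case (Cons x xs)
  then show ?case by (cases ys) (auto simp: add.commute)
qed simp

lemma map2_plus_left_cancel:
  fixes xs ys zs :: "'a :: cancel_semigroup_add list"
  assumes "length ys = length xs" and "length zs = length xs"
    and "map2 (+) xs ys = map2 (+) xs zs"
  shows "ys = zs"
  using assms
proof (induction xs arbitrary: ys zs)
  case (Cons x xs)
  obtain y ys' z zs' where ys: "ys = y # ys'" and zs: "zs = z # zs'"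
    using Cons.prems(1,2) by (cases ys; cases zs) auto
  show ?case using Cons.prems Cons.IH[of ys' zs'] unfolding ys zs by simp
qed simp

lemma map2_plus_replicate_0:
  "length ys = n \<Longrightarrow> map2 (+) (replicate n 0) ys = (ys :: 'a :: monoid_add list)"
  by (induction ys arbitrary: n) auto

lemma sum_list_map2_plus:
  "length xs = length ys \<Longrightarrow>
   sum_list (map2 (+) xs ys) = sum_list xs + sum_list (ys :: 'a :: comm_monoid_add list)"
  by (induction xs ys rule: list_induct2) (auto simp: ac_simps)

lemma map2_plus_in_down_closed:
  assumes "down_closed n A" and "map2 (+) xs ys \<in> A" and "length xs = length ys"
  shows "ys \<in> A"
proof -
  have "length (map2 (+) xs ys) = length ys" and "\<forall>i < length ys. ys ! i \<le> map2 (+) xs ys ! i"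
    using assms(3) by auto
  with assms(1,2) show ?thesis unfolding down_closed_def by metis
qed

lemma wsum_map2_plus:
  "length k = length w \<Longrightarrow> length k' = length w \<Longrightarrow>
   wsum w (map2 (+) k k') = wsum w k + wsum w k'"
  unfolding wsum_def by (simp add: algebra_simps sum.distrib)

lemma wsum_scale: "length k = length w \<Longrightarrow> wsum w (map ((*) j) k) = j * wsum w k"
  unfolding wsum_def by (simp add: algebra_simps sum_distrib_left)

lemma cadd_assoc: "cadd (cadd x y) z = cadd x (cadd y z)"
  by (cases x; cases y; cases z) (simp add: cadd_def map2_plus_assoc)

lemma cadd_commute: "cadd x y = cadd y x"
  by (cases x; cases y) (simp add: cadd_def map2_plus_commute add.commute)

lemma cscale_add: "cscale (a + b) x = cadd (cscale a x) (cscale b x)"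
  by (cases x) (simp add: cadd_def cscale_def zip_map1 zip_map2 zip_same_conv_map
                          o_def algebra_simps)

lemma cscale_1: "cscale 1 x = x"
  by (cases x) (simp add: cscale_def map_idI)

lemma cscale_Suc: "cscale (Suc j) x = cadd x (cscale j x)"
  by (metis cscale_1 cscale_add plus_1_eq_Suc)

lemma cscale_0: "x \<in> Ccone wa wb \<Longrightarrow> cscale 0 x = czero wa wb"
  by (cases x) (auto simp: cscale_def czero_def Ccone_def intro!: nth_equalityI)

lemma cadd_czero_left: "x \<in> Ccone wa wb \<Longrightarrow> cadd (czero wa wb) x = x"
  by (cases x) (simp add: cadd_def czero_def Ccone_def map2_plus_replicate_0)

lemma Ccone_cadd: "x \<in> Ccone wa wb \<Longrightarrow> y \<in> Ccone wa wb \<Longrightarrow> cadd x y \<in> Ccone wa wb"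
  by (cases x; cases y) (auto simp: cadd_def Ccone_def wsum_map2_plus intro: add_mono)

lemma Ccone_cscale: "x \<in> Ccone wa wb \<Longrightarrow> cscale j x \<in> Ccone wa wb"
  by (cases x) (auto simp: cscale_def Ccone_def wsum_scale)

lemma cadd_left_cancel:
  "x \<in> Ccone wa wb \<Longrightarrow> y \<in> Ccone wa wb \<Longrightarrow> z \<in> Ccone wa wb \<Longrightarrow>
   cadd x y = cadd x z \<Longrightarrow> y = z"
  by (cases x; cases y; cases z)
     (clarsimp simp: cadd_def Ccone_def, metis map2_plus_left_cancel)

lemma Cstar_cadd_right:
  assumes "down_closed (length wa) A" and "down_closed (length wb) B"
    and "cadd x y \<in> Cstar wa wb A B" and "x \<in> Ccone wa wb" and "y \<in> Ccone wa wb"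
  shows "y \<in> Cstar wa wb A B"
  using assms by (cases x; cases y)
    (auto simp: Cstar_def Ccone_def cadd_def intro: map2_plus_in_down_closed)

lemma cdivisible_cadd:
  "cdivisible wa wb y \<pi> \<Longrightarrow> x \<in> Ccone wa wb \<Longrightarrow> cdivisible wa wb (cadd x y) \<pi>"
proof -
  assume "cdivisible wa wb y \<pi>" and x: "x \<in> Ccone wa wb"
  then obtain d where d: "d \<in> Ccone wa wb" and "y = cadd \<pi> d"
    unfolding cdivisible_def by blast
  then have "cadd x y = cadd \<pi> (cadd x d)"
    by (metis cadd_assoc cadd_commute)
  with Ccone_cadd[OF x d] show ?thesis
    unfolding cdivisible_def by blast
qed

fun csize :: "cvec \<Rightarrow> nat" where
  "csize (k, l, s) = sum_list k + sum_list l + s"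

lemma csize_cadd:
  "x \<in> Ccone wa wb \<Longrightarrow> y \<in> Ccone wa wb \<Longrightarrow> csize (cadd x y) = csize x + csize y"
  by (cases x; cases y) (auto simp: cadd_def Ccone_def sum_list_map2_plus)

lemma csize_pos: "x \<in> Ccone wa wb \<Longrightarrow> x \<noteq> czero wa wb \<Longrightarrow> 0 < csize x"
  by (cases x) (auto simp: Ccone_def czero_def intro!: replicate_eqI)

lemma cdivisible_of_cadd_cscale_less:
  assumes p: "p \<in> Ccone wa wb" and q: "q \<in> Ccone wa wb" and q': "q' \<in> Ccone wa wb"
    and less: "j < j'" and eq: "cadd (cscale j p) q = cadd (cscale j' p) q'"
  shows "cdivisible wa wb q p"
proof -
  obtain m where "j' = Suc (j + m)" using less_imp_Suc_add[OF less] ..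
  then have j': "j' = j + Suc m" by simp
  have "cadd (cscale j p) q = cadd (cscale j p) (cadd (cscale (Suc m) p) q')"
    using eq unfolding j' cscale_add cadd_assoc .
  then have "q = cadd (cscale (Suc m) p) q'"
    by (rule cadd_left_cancel[OF Ccone_cscale[OF p] q Ccone_cadd[OF Ccone_cscale[OF p] q']])
  also have "\<dots> = cadd p (cadd (cscale m p) q')"
    unfolding cscale_Suc cadd_assoc ..
  finally show ?thesis
    unfolding cdivisible_def using Ccone_cadd[OF Ccone_cscale[OF p] q'] by blast
qed

lemma cadd_cscale_unique:
  assumes p: "p \<in> Ccone wa wb" and q: "q \<in> Ccone wa wb" and q': "q' \<in> Ccone wa wb"
    and "\<not> cdivisible wa wb q p" and "\<not> cdivisible wa wb q' p"
    and eq: "cadd (cscale j p) q = cadd (cscale j' p) q'"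
  shows "j = j' \<and> q = q'"
proof -
  have "j = j'"
    using cdivisible_of_cadd_cscale_less[OF p q q' _ eq]
          cdivisible_of_cadd_cscale_less[OF p q' q _ eq[symmetric]] assms(4,5)
    by (meson linorder_neqE_nat)
  with eq show ?thesis
    using cadd_left_cancel[OF Ccone_cscale[OF p] q q'] by blast
qed

lemma exists_cadd_cscale_not_cdivisible:
  assumes dA: "down_closed (length wa) A" and dB: "down_closed (length wb) B"
    and p: "p \<in> Ccone wa wb" "p \<noteq> czero wa wb"
  shows "y \<in> Cstar wa wb A B \<Longrightarrow> \<forall>\<pi> \<in> S. \<not> cdivisible wa wb y \<pi> \<Longrightarrow>
     \<exists>j q. q \<in> Cstar wa wb A B \<and> (\<forall>\<pi> \<in> insert p S. \<not> cdivisible wa wb q \<pi>)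
            \<and> y = cadd (cscale j p) q"
proof (induction "csize y" arbitrary: y rule: less_induct)
  case less
  have y: "y \<in> Ccone wa wb" using less.prems(1) unfolding Cstar_def by auto
  show ?case
  proof (cases "cdivisible wa wb y p")
    case False
    then show ?thesis
      using less.prems cscale_0[OF p(1)] cadd_czero_left[OF y]
      by (intro exI[of _ 0] exI[of _ y]) auto
  next
    case True
    then obtain d where d: "d \<in> Ccone wa wb" and y_eq: "y = cadd p d"
      unfolding cdivisible_def by blast
    have "d \<in> Cstar wa wb A B"
      using Cstar_cadd_right[OF dA dB] less.prems(1) d p(1) y_eq by blast
    moreover have "\<forall>\<pi> \<in> S. \<not> cdivisible wa wb d \<pi>"
      using less.prems(2) cdivisible_cadd[OF _ p(1)] y_eq by blast
    moreover have "csize d < csize y"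
      using csize_cadd[OF p(1) d] csize_pos[OF p] y_eq by simp
    ultimately obtain j q where "q \<in> Cstar wa wb A B"
        and "\<forall>\<pi> \<in> insert p S. \<not> cdivisible wa wb q \<pi>" and "d = cadd (cscale j p) q"
      using less.hyps by blast
    then show ?thesis
      using y_eq by (intro exI[of _ "Suc j"] exI[of _ q]) (simp add: cscale_Suc cadd_assoc)
  qed
qed

theorem lemma15p2:
  fixes wa wb :: "nat list" and A B :: "nat list set"
    and pis :: "cvec list" and i :: nat and x :: cvec
  assumes "down_closed (length wa) A" and "down_closed (length wb) B"
    and "distinct pis"
    and "set pis = {\<pi> \<in> Cstar wa wb A B. cprime wa wb \<pi>}"
    and "i < length pis"
    and "x \<in> Cstar wa wb A B"
    and "\<forall>\<pi> \<in> set (take i pis). \<not> cdivisible wa wb x \<pi>"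
  shows "\<exists>!(j, q). q \<in> Cstar wa wb A B
            \<and> (\<forall>\<pi> \<in> set (take (Suc i) pis). \<not> cdivisible wa wb q \<pi>)
            \<and> x = cadd (cscale j (pis ! i)) q"
proof -
  let ?p = "pis ! i"
  have "cprime wa wb ?p" using assms(4,5) nth_mem by blast
  then have p: "?p \<in> Ccone wa wb" "?p \<noteq> czero wa wb" unfolding cprime_def by auto
  have take_Suc: "set (take (Suc i) pis) = insert ?p (set (take i pis))"
    using assms(5) by (simp add: take_Suc_conv_app_nth)
  obtain j q where q: "q \<in> Cstar wa wb A B"
      and q_nd: "\<forall>\<pi> \<in> set (take (Suc i) pis). \<not> cdivisible wa wb q \<pi>"
      and x_eq: "x = cadd (cscale j ?p) q"
    using exists_cadd_cscale_not_cdivisible[OF assms(1,2) p assms(6,7)]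
    unfolding take_Suc by blast
  have "(j', q') = (j, q)"
    if "q' \<in> Cstar wa wb A B" and "\<forall>\<pi> \<in> set (take (Suc i) pis). \<not> cdivisible wa wb q' \<pi>"
      and "x = cadd (cscale j' ?p) q'" for j' q'
  proof -
    have "\<not> cdivisible wa wb q ?p" and "\<not> cdivisible wa wb q' ?p"
      using q_nd that(2) unfolding take_Suc by auto
    with q x_eq that(1,3) show ?thesis
      using cadd_cscale_unique[OF p(1), of q' q j' j] by (auto simp: Cstar_def)
  qed
  with q q_nd x_eq show ?thesis by (intro ex1I[of _ "(j, q)"]) auto
qed

end
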